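(* Let $\nu\in\mathcal M_0$. (1) Let $\mu,\tau\in\mathcal M_1$. Then, as formal power series in $z^{-1}$ (coefficientwise), \[ G_{\mu\boxplus(\tau+\varepsilon\nu)}(z)=G_{\mu\boxplus\tau}(z)+\varepsilon\,G_\nu(F_{\tau,\mu\boxplus\tau}(z))\,F'_{\tau,\mu\boxplus\tau}(z)+o(\varepsilon), \] where $F_{\tau,\mu\boxplus\tau}=K_\tau\circ G_{\mu\boxplus\tau}$. That is, the Gâteaux derivative $D_\tau C_\mu(\nu)$ exists in $\mathcal M_0$ and $G_{D_\tau C_\mu(\nu)}(z)=G_\nu(F_{\tau,\mu\boxplus\tau}(z))F'_{\tau,\mu\boxplus\tau}(z)$. (2) If $\{\mu_t\}$ is a free convolution semigroup, then $G_{\mu_t\boxplus(\mu_s+\varepsilon\nu)}(z)=G_{s+t}(z)+\varepsilon G_\nu(F_{s,s+t}(z))F'_{s,s+t}(z)+o(\varepsilon)$. (3) If $\{V_n(x,t)\}_{n\ge1}$ is a family of fluctuation polynomials for $\{\mu_t\}$ with dual family $\{V_n^\ast(t)\}$, then $G_{V_n^\ast(s)}(F_{s,t}(z))F'_{s,t}(z)=G_{V_n^\ast(t)}(z)$.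
   Context: $\mathcal M$ = linear functionals on $\mathbb C[x]$ with weak-$*$ topology (convergence of each moment), $\mathcal M_1$, $\mathcal M_0$ those with value $1$, resp. $0$, on the constant $1$. For $\nu\in\mathcal M$, $G_\nu(z)=\sum\langle\nu,x^n\rangle z^{-(n+1)}$; for $\nu\in\mathcal M_1$, $K_\nu$ is its compositional inverse and $R_\nu=K_\nu-\frac1z$; $\boxplus$ on $\mathcal M_1$ is defined by $R_{\mu\boxplus\nu}=R_\mu+R_\nu$. $C_\mu(\tau)=\mu\boxplus\tau$ and $D_\tau C_\mu(\nu)=\lim_{\varepsilon\to0}\frac1\varepsilon(C_\mu(\tau+\varepsilon\nu)-C_\mu(\tau))$ in the weak-$*$ topology. $\{\mu_t\}$ is the free convolution semigroup of a freely infinitely divisible probability measure $\mu$ with all moments finite ($R_{\mu_t}=tR_\mu$), $G_t=G_{\mu_t}$, $K_t=K_{\mu_t}$, $F_{s,t}=K_s\circ G_t$. Martingale polynomial: $p(x,t)$ polynomial in $x$ with $\mathcal K_{s,t}(p(\cdot,t))=p(\cdot,s)$ for $s<t$, $\mathcal K_{s,t}$ the linear operator on $\mathbb C[x]$ determined coefficientwise by $\mathcal K_{s,t}(\frac1{z-x})=\frac1{F_{s,t}(z)-x}$. Fluctuation polynomials: a family $\{V_n(x,t)\}_{n\ge1}$ such that $\partial_xV_n$ is a martingale polynomial of degree $n-1$; the dual family $V_n^\ast(t)\in\mathcal M_0$ is determined by $\langle V_n^\ast(t),1\rangle=0$, $\langle V_n^\ast(t),V_k(\cdot,t)\rangle=\delta_{nk}$.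 *)

theory Defs
  imports "HOL-Probability.Probability" "HOL-Computational_Algebra.Formal_Laurent_Series"
begin

(* A linear functional nu on C[x] is represented by its moment sequence
   nu n = <nu, x^n>.  M_1 : nu 0 = 1,  M_0 : nu 0 = 0.
   Convention: all series "in z^{-1}" are formal series in the variable
   X = fps_X = w = 1/z.  *)

type_synonym moments = "nat \<Rightarrow> complex"

(* G_nu(z) = sum_n <nu,x^n> z^{-(n+1)}, as a power series in w = 1/z *)
definition cauchy :: "moments \<Rightarrow> complex fps" where
  "cauchy \<nu> = Abs_fps (\<lambda>n. case n of 0 \<Rightarrow> 0 | Suc k \<Rightarrow> \<nu> k)"

(* 1 / K_tau(u) as a power series in u: since G_tau(K_tau(u)) = u and
   G_tau(z) = cauchy tau (1/z), the series 1/K_tau is the compositional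
   inverse of cauchy tau. *)
definition recipK :: "moments \<Rightarrow> complex fps" where
  "recipK \<tau> = fps_inv (cauchy \<tau>)"

definition Ktrans :: "moments \<Rightarrow> complex fls" where
  "Ktrans \<tau> = inverse (fps_to_fls (recipK \<tau>))"

definition Rtrans :: "moments \<Rightarrow> complex fls" where
  "Rtrans \<tau> = Ktrans \<tau> - fls_X_inv"

definition boxplus :: "moments \<Rightarrow> moments \<Rightarrow> moments" where
  "boxplus \<mu> \<nu> = (THE \<rho>. \<rho> 0 = 1 \<and> Rtrans \<rho> = Rtrans \<mu> + Rtrans \<nu>)"

(* 1 / F_{tau,rho}(z), F_{tau,rho} = K_tau o G_rho, as power series in w = 1/z *)
definition Finv :: "moments \<Rightarrow> moments \<Rightarrow> complex fps" where
  "Finv \<tau> \<rho> = recipK \<tau> oo cauchy \<rho>"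

definition Ftrans :: "moments \<Rightarrow> moments \<Rightarrow> complex fls" where
  "Ftrans \<tau> \<rho> = inverse (fps_to_fls (Finv \<tau> \<rho>))"

(* derivative d/dz of a Laurent series in w = 1/z:  d/dz = - w^2 d/dw *)
definition zderiv :: "complex fls \<Rightarrow> complex fls" where
  "zderiv L = - (fls_X ^ 2 * fls_deriv L)"

(* G_nu(F_{tau,rho}(z)) * F'_{tau,rho}(z), as Laurent series in w = 1/z.
   G_nu(F(z)) = sum_n nu_n F(z)^{-(n+1)} = cauchy nu oo (1/F). *)
definition GF :: "moments \<Rightarrow> moments \<Rightarrow> moments \<Rightarrow> complex fls" where
  "GF \<nu> \<tau> \<rho> = fps_to_fls (cauchy \<nu> oo Finv \<tau> \<rho>) * zderiv (Ftrans \<tau> \<rho>)"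

definition is_moment_seq :: "moments \<Rightarrow> bool" where
  "is_moment_seq m \<longleftrightarrow> (\<exists>M :: real measure. prob_space M \<and> sets M = sets borel \<and>
      (\<forall>n. integrable M (\<lambda>x. x ^ n)) \<and> (\<forall>n. m n = complex_of_real (\<integral>x. x ^ n \<partial>M)))"

definition free_semigroup :: "(real \<Rightarrow> moments) \<Rightarrow> bool" where
  "free_semigroup mu \<longleftrightarrow> (\<forall>t\<ge>0. is_moment_seq (mu t) \<and>
      Rtrans (mu t) = fls_const (complex_of_real t) * Rtrans (mu 1))"

(* linear operator on C[x] determined coefficientwise by
   K(1/(z-x)) = 1/(F(z)-x), where f = 1/F as series in w = 1/z:
   K(x^m) = sum_{n<=m} [w^{m+1}] f^{n+1} x^n *)
definition Kop :: "complex fps \<Rightarrow> complex poly \<Rightarrow> complex poly" where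
  "Kop f p = (\<Sum>m\<le>degree p. smult (coeff p m)
               (\<Sum>n\<le>m. monom ((f ^ (n+1)) $ (m+1)) n))"

definition Kst :: "(real \<Rightarrow> moments) \<Rightarrow> real \<Rightarrow> real \<Rightarrow> complex poly \<Rightarrow> complex poly" where
  "Kst mu s t = Kop (Finv (mu s) (mu t))"

definition martingale_poly :: "(real \<Rightarrow> moments) \<Rightarrow> (real \<Rightarrow> complex poly) \<Rightarrow> bool" where
  "martingale_poly mu p \<longleftrightarrow> (\<forall>s t. 0 \<le> s \<and> s < t \<longrightarrow> Kst mu s t (p t) = p s)"

definition fluctuation_polys :: "(real \<Rightarrow> moments) \<Rightarrow> (nat \<Rightarrow> real \<Rightarrow> complex poly) \<Rightarrow> bool" where
  "fluctuation_polys mu V \<longleftrightarrow> (\<forall>n\<ge>1. martingale_poly mu (\<lambda>t. pderiv (V n t)) \<and>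
      (\<forall>t\<ge>0. pderiv (V n t) \<noteq> 0 \<and> degree (pderiv (V n t)) = n - 1))"

definition pairing :: "moments \<Rightarrow> complex poly \<Rightarrow> complex" where
  "pairing \<phi> p = (\<Sum>i\<le>degree p. coeff p i * \<phi> i)"

definition dual_family :: "(nat \<Rightarrow> real \<Rightarrow> complex poly) \<Rightarrow> (nat \<Rightarrow> real \<Rightarrow> moments) \<Rightarrow> bool" where
  "dual_family V Vs \<longleftrightarrow> (\<forall>n\<ge>1. \<forall>t\<ge>0. Vs n t 0 = 0 \<and>
      (\<forall>k\<ge>1. pairing (Vs n t) (V k t) = (if n = k then 1 else 0)))"

end

theory Submission
  imports Defs
begin

(* Free convolution adds K-transforms up to the constant 1/w, so perturbing tau to tau + eps nu
   changes 1/K of mu boxplus tau in the same relative way as 1/K of tau.  All transforms involved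
   are formal power series in w = 1/z whose coefficients depend smoothly on eps, and they can be
   differentiated coefficientwise at eps = 0; differentiating G o K = id for tau and for
   mu boxplus tau turns the relation above into G_nu(F) F' with F = K_tau o G_(mu boxplus tau).
   Part (2) is the case mu = mu_t, tau = mu_s, as R-transforms of the semigroup scale linearly.
   For (3), write G_phi = w^2 E' for phi in M_0; then G_phi(F) F' = w^2 (E o 1/F)' is the Cauchy
   transform of a functional psi with <psi, p> = <phi, q> whenever K_(s,t) p' = q'.  By the
   martingale property of the V_k', psi pairs with the V_k(t) as V_n*(s) pairs with the V_k(s),
   hence psi = V_n*(t). *)

no_notation vec_nth (infixl \<open>$\<close> 90)

section \<open>Coefficientwise derivatives of parametrised power series\<close>

definition has_coeffwise_derivative :: "(real \<Rightarrow> 'a::real_normed_vector fps) \<Rightarrow> 'a fps \<Rightarrow> real \<Rightarrow> bool"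
  where "has_coeffwise_derivative A A' x \<longleftrightarrow>
           (\<forall>n. ((\<lambda>e. A e $ n) has_vector_derivative A' $ n) (at x))"

lemma has_coeffwise_derivative_const: "has_coeffwise_derivative (\<lambda>e. C) 0 x"
  by (simp add: has_coeffwise_derivative_def)

lemma has_coeffwise_derivative_add:
  "has_coeffwise_derivative A A' x \<Longrightarrow> has_coeffwise_derivative B B' x \<Longrightarrow>
    has_coeffwise_derivative (\<lambda>e. A e + B e) (A' + B') x"
  by (auto simp: has_coeffwise_derivative_def intro!: has_vector_derivative_add)

lemma has_coeffwise_derivative_diff:
  "has_coeffwise_derivative A A' x \<Longrightarrow> has_coeffwise_derivative B B' x \<Longrightarrow>
    has_coeffwise_derivative (\<lambda>e. A e - B e) (A' - B') x"
  by (auto simp: has_coeffwise_derivative_def intro!: has_vector_derivative_diff)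

lemma has_coeffwise_derivative_shift:
  "has_coeffwise_derivative A A' x \<Longrightarrow>
    has_coeffwise_derivative (\<lambda>e. fps_shift k (A e)) (fps_shift k A') x"
  by (simp add: has_coeffwise_derivative_def)

lemma has_coeffwise_derivative_affine:
  fixes C N :: "'a::real_normed_algebra_1 fps"
  shows "has_coeffwise_derivative (\<lambda>e. C + fps_const (of_real e) * N) N x"
  unfolding has_coeffwise_derivative_def
  by (auto intro!: derivative_eq_intros)

lemma has_coeffwise_derivative_mult:
  fixes A B :: "real \<Rightarrow> 'a::real_normed_field fps"
  assumes "has_coeffwise_derivative A A' x" "has_coeffwise_derivative B B' x"
  shows "has_coeffwise_derivative (\<lambda>e. A e * B e) (A x * B' + A' * B x) x"
  unfolding has_coeffwise_derivative_def
proof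
  fix n
  have "((\<lambda>e. \<Sum>i=0..n. A e $ i * B e $ (n - i)) has_vector_derivative
      (\<Sum>i=0..n. A x $ i * B' $ (n - i) + A' $ i * B x $ (n - i))) (at x)"
    using assms by (intro has_vector_derivative_sum has_vector_derivative_mult)
      (auto simp: has_coeffwise_derivative_def)
  then show "((\<lambda>e. (A e * B e) $ n) has_vector_derivative (A x * B' + A' * B x) $ n) (at x)"
    by (simp add: fps_mult_nth sum.distrib)
qed

lemma has_coeffwise_derivative_power:
  fixes A :: "real \<Rightarrow> 'a::real_normed_field fps"
  assumes "has_coeffwise_derivative A A' x"
  shows "has_coeffwise_derivative (\<lambda>e. A e ^ i) (of_nat i * A x ^ (i - 1) * A') x"
proof (induction i)
  case 0
  show ?case by (simp add: has_coeffwise_derivative_const)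
next
  case (Suc i)
  have "A x * (of_nat i * A x ^ (i - 1) * A') + A' * A x ^ i = of_nat (Suc i) * A x ^ i * A'"
    by (cases i) (simp_all add: algebra_simps)
  with has_coeffwise_derivative_mult[OF assms Suc.IH] show ?case by simp
qed

lemma has_coeffwise_derivative_unique:
  "has_coeffwise_derivative A A' x \<Longrightarrow> has_coeffwise_derivative A A'' x \<Longrightarrow> A' = A''"
  unfolding has_coeffwise_derivative_def fps_eq_iff using vector_derivative_unique_at by blast

lemma has_coeffwise_derivative_nth_eq_0:
  assumes "has_coeffwise_derivative A A' x" "\<And>e. A e $ n = c"
  shows "A' $ n = 0"
proof (rule vector_derivative_unique_at)
  show "((\<lambda>e. A e $ n) has_vector_derivative A' $ n) (at x)"
    using assms(1) by (simp add: has_coeffwise_derivative_def)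
  show "((\<lambda>e. A e $ n) has_vector_derivative 0) (at x)"
    by (simp add: assms(2))
qed

lemma has_coeffwise_derivative_strong_induct:
  assumes "\<And>n. (\<And>m. m < n \<Longrightarrow> (\<lambda>e. A e $ m) differentiable at x) \<Longrightarrow> (\<lambda>e. A e $ n) differentiable at x"
  shows "\<exists>A'. has_coeffwise_derivative A A' x"
proof
  have "(\<lambda>e. A e $ n) differentiable at x" for n
    by (induction n rule: less_induct) (rule assms)
  then show "has_coeffwise_derivative A (Abs_fps (\<lambda>n. vector_derivative (\<lambda>e. A e $ n) (at x))) x"
    by (simp add: has_coeffwise_derivative_def vector_derivative_works)
qed

lemma has_vector_derivative_imp_remainder_quotient:
  fixes f :: "real \<Rightarrow> 'a::real_normed_field"
  assumes "(f has_vector_derivative f') (at x)"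
  shows "((\<lambda>y. (f y - f x - of_real (y - x) * f') / of_real (y - x)) \<longlongrightarrow> 0) (at x)"
proof -
  have "((\<lambda>y. norm ((f y - f x - (y - x) *\<^sub>R f') /\<^sub>R norm (y - x))) \<longlongrightarrow> 0) (at x)"
    using assms
    by (intro tendsto_norm_zero) (simp add: has_vector_derivative_def has_derivative_at_within)
  moreover have "norm ((f y - f x - (y - x) *\<^sub>R f') /\<^sub>R norm (y - x))
      = norm ((f y - f x - of_real (y - x) * f') / of_real (y - x))" for y
    by (simp add: norm_divide norm_mult norm_inverse scaleR_conv_of_real divide_inverse mult.commute
        flip: of_real_diff)
  ultimately show ?thesis
    by (simp only:) (rule tendsto_norm_zero_cancel)
qed

lemma has_vector_derivative_imp_difference_quotient:
  fixes f :: "real \<Rightarrow> 'a::real_normed_field"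
  assumes "(f has_vector_derivative f') (at x)"
  shows "((\<lambda>y. (f y - f x) / of_real (y - x)) \<longlongrightarrow> f') (at x)"
proof -
  have "((\<lambda>y. (f y - f x - of_real (y - x) * f') / of_real (y - x) + f') \<longlongrightarrow> 0 + f') (at x)"
    using has_vector_derivative_imp_remainder_quotient[OF assms] by (rule tendsto_add) simp
  moreover have "\<forall>\<^sub>F y in at x. (f y - f x - of_real (y - x) * f') / of_real (y - x) + f'
      = (f y - f x) / of_real (y - x)"
    unfolding eventually_at_filter by (simp add: diff_divide_distrib)
  ultimately show ?thesis
    by (simp add: Lim_transform_eventually)
qed

lemma fps_compose_nth_le:
  fixes A B :: "'a::comm_ring_1 fps"
  assumes "B $ 0 = 0" "n \<le> N"
  shows "(A oo B) $ n = (\<Sum>i=0..N. A $ i * (B ^ i) $ n)"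
  unfolding fps_compose_nth
  by (rule sum.mono_neutral_left) (use assms startsby_zero_power_prefix[OF assms(1)] in auto)

lemma fps_compose_deriv_mult_nth:
  fixes A B C :: "'a::comm_ring_1 fps"
  assumes B0: "B $ 0 = 0"
  shows "((fps_deriv A oo B) * C) $ n = (\<Sum>i=0..Suc n. A $ i * (of_nat i * B ^ (i - 1) * C) $ n)"
proof -
  let ?P = "\<Sum>j=0..n. fps_const (fps_deriv A $ j) * B ^ j"
  have "((fps_deriv A oo B) * C) $ n = (?P * C) $ n"
    unfolding fps_mult_nth
    by (intro sum.cong refl) (simp add: fps_compose_nth_le[OF B0] fps_sum_nth)
  also have "\<dots> = (\<Sum>j=0..n. fps_deriv A $ j * (B ^ j * C) $ n)"
    by (simp add: sum_distrib_right fps_sum_nth mult.assoc)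
  also have "\<dots> = (\<Sum>j=0..n. A $ Suc j * (of_nat (Suc j) * B ^ j * C) $ n)"
    by (simp add: mult.assoc fps_of_nat[symmetric] del: of_nat_Suc) (simp add: mult_ac)
  also have "\<dots> = (\<Sum>i=0..Suc n. A $ i * (of_nat i * B ^ (i - 1) * C) $ n)"
    by (subst sum.atLeast0_atMost_Suc_shift) simp
  finally show ?thesis .
qed

lemma has_coeffwise_derivative_compose:
  fixes A B :: "real \<Rightarrow> 'a::real_normed_field fps"
  assumes A: "has_coeffwise_derivative A A' x" and B: "has_coeffwise_derivative B B' x"
    and B0: "\<And>e. B e $ 0 = 0"
  shows "has_coeffwise_derivative (\<lambda>e. A e oo B e) ((A' oo B x) + (fps_deriv (A x) oo B x) * B') x"
  unfolding has_coeffwise_derivative_def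
proof
  fix n
  have "((\<lambda>e. \<Sum>i=0..Suc n. A e $ i * (B e ^ i) $ n) has_vector_derivative
      (\<Sum>i=0..Suc n. A x $ i * (of_nat i * B x ^ (i - 1) * B') $ n + A' $ i * (B x ^ i) $ n)) (at x)"
    using A has_coeffwise_derivative_power[OF B]
    by (intro has_vector_derivative_sum has_vector_derivative_mult)
      (simp_all add: has_coeffwise_derivative_def)
  then show "((\<lambda>e. (A e oo B e) $ n) has_vector_derivative
      ((A' oo B x) + (fps_deriv (A x) oo B x) * B') $ n) (at x)"
    by (simp add: fps_compose_nth_le[OF B0, of n "Suc n"] fps_compose_deriv_mult_nth[OF B0]
        sum.distrib add.commute)
qed

lemma has_coeffwise_derivative_inverse:
  fixes A :: "real \<Rightarrow> 'a::real_normed_field fps"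
  assumes A: "has_coeffwise_derivative A A' x" and A0: "\<And>e. A e $ 0 = 1"
  shows "has_coeffwise_derivative (\<lambda>e. inverse (A e)) (- (A' * inverse (A x) ^ 2)) x"
proof -
  have A_differentiable: "(\<lambda>e. A e $ n) differentiable at x" for n
    using A by (auto simp: has_coeffwise_derivative_def intro: differentiableI_vector)
  obtain B' where B': "has_coeffwise_derivative (\<lambda>e. inverse (A e)) B' x"
  proof (atomize_elim, rule has_coeffwise_derivative_strong_induct)
    fix n
    assume IH: "\<And>m. m < n \<Longrightarrow> (\<lambda>e. inverse (A e) $ m) differentiable at x"
    show "(\<lambda>e. inverse (A e) $ n) differentiable at x"
    proof (cases n)
      case 0
      then show ?thesis by (simp add: A0)
    next
      case (Suc m)
      have "inverse (A e) $ n = - (\<Sum>i=1..n. A e $ i * inverse (A e) $ (n - i))" for e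
        by (simp add: Suc fps_inverse_def A0)
      moreover have "(\<lambda>e. - (\<Sum>i=1..n. A e $ i * inverse (A e) $ (n - i))) differentiable at x"
        using Suc
        by (intro differentiable_minus differentiable_sum finite_atLeastAtMost ballI
            differentiable_mult A_differentiable IH) auto
      ultimately show ?thesis by simp
    qed
  qed
  have "has_coeffwise_derivative (\<lambda>e. A e * inverse (A e)) (A x * B' + A' * inverse (A x)) x"
    by (rule has_coeffwise_derivative_mult[OF A B'])
  moreover have "has_coeffwise_derivative (\<lambda>e. A e * inverse (A e)) 0 x"
    using has_coeffwise_derivative_const[of 1] by (simp add: A0 inverse_mult_eq_1')
  ultimately have derivative_identity: "A x * B' + A' * inverse (A x) = 0"
    by (rule has_coeffwise_derivative_unique)
  have "B' = (inverse (A x) * A x) * B'"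
    by (simp add: A0 inverse_mult_eq_1)
  also have "\<dots> = inverse (A x) * (A x * B' + A' * inverse (A x)) - A' * inverse (A x) ^ 2"
    by (simp add: algebra_simps power2_eq_square)
  finally show ?thesis
    using B' derivative_identity by simp
qed

lemma has_coeffwise_derivative_fps_inv:
  fixes A :: "real \<Rightarrow> 'a::real_normed_field fps"
  assumes A: "has_coeffwise_derivative A A' x" and A0: "\<And>e. A e $ 0 = 0" and A1: "\<And>e. A e $ 1 = 1"
  shows "has_coeffwise_derivative (\<lambda>e. fps_inv (A e))
           (- (A' oo fps_inv (A x)) * fps_deriv (fps_inv (A x))) x"
proof -
  have A_power_differentiable: "(\<lambda>e. (A e ^ i) $ n) differentiable at x" for i n
    using has_coeffwise_derivative_power[OF A]
    by (auto simp: has_coeffwise_derivative_def intro: differentiableI_vector)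
  obtain B' where B': "has_coeffwise_derivative (\<lambda>e. fps_inv (A e)) B' x"
  proof (atomize_elim, rule has_coeffwise_derivative_strong_induct)
    fix n
    assume IH: "\<And>m. m < n \<Longrightarrow> (\<lambda>e. fps_inv (A e) $ m) differentiable at x"
    show "(\<lambda>e. fps_inv (A e) $ n) differentiable at x"
    proof (cases n)
      case 0
      then show ?thesis by (simp add: fps_inv_def)
    next
      case (Suc m)
      have "fps_inv (A e) $ n = fps_X $ n - (\<Sum>i=0..m. fps_inv (A e) $ i * (A e ^ i) $ n)" for e
        using A1[of e] by (simp add: Suc fps_inv_def)
      moreover have
        "(\<lambda>e. fps_X $ n - (\<Sum>i=0..m. fps_inv (A e) $ i * (A e ^ i) $ n)) differentiable at x"
        using Suc
        by (intro differentiable_diff differentiable_const differentiable_sum finite_atLeastAtMost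
            ballI differentiable_mult A_power_differentiable IH) auto
      ultimately show ?thesis by simp
    qed
  qed
  let ?I = "fps_inv (A x)"
  have "has_coeffwise_derivative (\<lambda>e. A e oo fps_inv (A e))
      ((A' oo ?I) + (fps_deriv (A x) oo ?I) * B') x"
    by (rule has_coeffwise_derivative_compose[OF A B']) (simp add: fps_inv_def)
  moreover have "A e oo fps_inv (A e) = fps_X" for e
    by (rule fps_inv_right) (simp_all add: A0 A1[unfolded One_nat_def])
  then have "has_coeffwise_derivative (\<lambda>e. A e oo fps_inv (A e)) 0 x"
    using has_coeffwise_derivative_const[of fps_X] by simp
  ultimately have derivative_identity: "(A' oo ?I) + (fps_deriv (A x) oo ?I) * B' = 0"
    by (rule has_coeffwise_derivative_unique)
  have "(fps_deriv (A x) oo ?I) * fps_deriv ?I = 1"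
    using fps_inv_deriv[of "A x"] A0 A1
    by (simp add: inverse_mult_eq_1' fps_compose_nth fps_inv_def)
  then have "B' = ((fps_deriv (A x) oo ?I) * fps_deriv ?I) * B'"
    by simp
  also have "\<dots> = fps_deriv ?I * ((A' oo ?I) + (fps_deriv (A x) oo ?I) * B')
      - (A' oo ?I) * fps_deriv ?I"
    by (simp add: algebra_simps)
  finally show ?thesis
    using B' derivative_identity by simp
qed

section \<open>Free convolution via the series w K(w)\<close>

lemma cauchy_nth_0 [simp]: "cauchy \<nu> $ 0 = 0"
  by (simp add: cauchy_def)

lemma cauchy_nth_Suc [simp]: "cauchy \<nu> $ Suc k = \<nu> k"
  by (simp add: cauchy_def)

lemma cauchy_coeffs: "F $ 0 = 0 \<Longrightarrow> cauchy (\<lambda>n. F $ Suc n) = F"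
  by (rule fps_ext) (auto simp: cauchy_def split: nat.split)

lemma cauchy_eq_iff: "cauchy \<rho> = cauchy \<sigma> \<longleftrightarrow> \<rho> = \<sigma>"
  by (metis cauchy_nth_Suc ext)

lemma recipK_nth_0 [simp]: "recipK \<tau> $ 0 = 0"
  by (simp add: recipK_def fps_inv_def)

lemma recipK_nth_1: "\<tau> 0 = 1 \<Longrightarrow> recipK \<tau> $ 1 = 1"
  by (simp add: recipK_def fps_inv_def)

lemma cauchy_eq_fps_inv_recipK: "\<tau> 0 = 1 \<Longrightarrow> cauchy \<tau> = fps_inv (recipK \<tau>)"
  unfolding recipK_def by (rule fps_inv_idempotent[symmetric]) simp_all

(* The power series w K_tau(w) = 1 + w R_tau(w). *)
definition XKtrans :: "moments \<Rightarrow> complex fps" where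
  "XKtrans \<tau> = inverse (fps_shift 1 (recipK \<tau>))"

lemma XKtrans_nth_0: "\<tau> 0 = 1 \<Longrightarrow> XKtrans \<tau> $ 0 = 1"
  by (simp add: XKtrans_def recipK_nth_1[unfolded One_nat_def])

lemma recipK_eq_X_mult_inverse_XKtrans:
  assumes "\<tau> 0 = 1"
  shows "recipK \<tau> = fps_X * inverse (XKtrans \<tau>)"
proof -
  have "fps_shift 1 (recipK \<tau>) $ 0 \<noteq> 0"
    using assms by (simp add: recipK_nth_1[unfolded One_nat_def])
  then show ?thesis
    by (simp add: XKtrans_def fps_ext)
qed

lemma fps_to_fls_XKtrans:
  assumes "\<tau> 0 = 1"
  shows "fps_to_fls (XKtrans \<tau>) = fls_X * Rtrans \<tau> + 1"
proof -
  have "Ktrans \<tau> = inverse (fls_X * fps_to_fls (inverse (XKtrans \<tau>)))"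
    unfolding Ktrans_def
    by (simp add: recipK_eq_X_mult_inverse_XKtrans[of \<tau>, OF assms] fls_times_fps_to_fls)
  also have "\<dots> = fls_X_inv * fps_to_fls (XKtrans \<tau>)"
    using XKtrans_nth_0[of \<tau>, OF assms]
    by (simp add: fls_inverse_fps_to_fls fls_inverse_X)
  finally have "Ktrans \<tau> = fls_X_inv * fps_to_fls (XKtrans \<tau>)" .
  moreover have "fls_X * fls_X_inv = (1 :: complex fls)"
    by (simp flip: fls_inverse_X)
  ultimately show ?thesis
    by (simp add: Rtrans_def right_diff_distrib mult.assoc[symmetric])
qed

lemma Rtrans_injective:
  assumes "\<rho> 0 = 1" "\<sigma> 0 = 1" "Rtrans \<rho> = Rtrans \<sigma>"
  shows "\<rho> = \<sigma>"
proof -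
  have "XKtrans \<rho> = XKtrans \<sigma>"
    using assms fps_to_fls_XKtrans[of \<rho>] fps_to_fls_XKtrans[of \<sigma>] by (metis fps_to_fls_eq_iff)
  then have "recipK \<rho> = recipK \<sigma>"
    using assms by (simp add: recipK_eq_X_mult_inverse_XKtrans)
  then show ?thesis
    using assms by (metis cauchy_eq_fps_inv_recipK cauchy_eq_iff)
qed

lemma boxplus_exists:
  assumes "\<mu> 0 = 1" "\<tau> 0 = 1"
  shows "\<exists>\<rho>. \<rho> 0 = 1 \<and> Rtrans \<rho> = Rtrans \<mu> + Rtrans \<tau>"
proof -
  define P where "P = XKtrans \<mu> + XKtrans \<tau> - 1"
  have P0: "P $ 0 = 1"
    using assms by (simp add: P_def XKtrans_nth_0)
  define R where "R = fps_X * inverse P"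
  have R0: "R $ 0 = 0" and R1: "R $ 1 = 1"
    using P0 by (simp_all add: R_def)
  define \<rho> where "\<rho> = (\<lambda>n. fps_inv R $ Suc n)"
  have cauchy_\<rho>: "cauchy \<rho> = fps_inv R"
    unfolding \<rho>_def by (rule cauchy_coeffs) (simp add: fps_inv_def)
  have \<rho>0: "\<rho> 0 = 1"
    using R1 by (simp add: \<rho>_def fps_inv_def)
  have "recipK \<rho> = R"
    unfolding recipK_def cauchy_\<rho> using R0 R1 by (simp add: fps_inv_idempotent)
  moreover have "fps_shift 1 R = inverse P"
    unfolding R_def by (metis fps_shift_times_fps_X' mult.commute)
  ultimately have "XKtrans \<rho> = P"
    using P0 by (simp add: XKtrans_def)
  then have "fps_to_fls (XKtrans \<rho>) = fps_to_fls (XKtrans \<mu>) + fps_to_fls (XKtrans \<tau>) - 1"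
    by (simp add: P_def)
  then have "fls_X * Rtrans \<rho> = fls_X * (Rtrans \<mu> + Rtrans \<tau>)"
    using assms \<rho>0 by (simp add: fps_to_fls_XKtrans algebra_simps)
  then show ?thesis
    using \<rho>0 by auto
qed

lemma boxplus_eqI:
  assumes "\<rho> 0 = 1" "Rtrans \<rho> = Rtrans \<mu> + Rtrans \<tau>"
  shows "boxplus \<mu> \<tau> = \<rho>"
  unfolding boxplus_def by (rule the_equality) (use assms Rtrans_injective in auto)

lemma
  assumes "\<mu> 0 = 1" "\<tau> 0 = 1"
  shows boxplus_nth_0: "boxplus \<mu> \<tau> 0 = 1"
    and Rtrans_boxplus: "Rtrans (boxplus \<mu> \<tau>) = Rtrans \<mu> + Rtrans \<tau>"
  using boxplus_exists[of \<mu> \<tau>, OF assms] boxplus_eqI by auto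

lemma XKtrans_boxplus:
  assumes "\<mu> 0 = 1" "\<tau> 0 = 1"
  shows "XKtrans (boxplus \<mu> \<tau>) = XKtrans \<mu> + XKtrans \<tau> - 1"
  using fps_to_fls_XKtrans[of "boxplus \<mu> \<tau>"] fps_to_fls_XKtrans[of \<mu>] fps_to_fls_XKtrans[of \<tau>]
    boxplus_nth_0[of \<mu> \<tau>, OF assms] Rtrans_boxplus[of \<mu> \<tau>, OF assms] assms
  by (simp flip: fps_to_fls_eq_iff add: algebra_simps)

section \<open>Perturbing one argument of a free convolution\<close>

definition recipK_variation :: "moments \<Rightarrow> moments \<Rightarrow> complex fps" where
  "recipK_variation \<tau> \<nu> = - (cauchy \<nu> oo recipK \<tau>) * fps_deriv (recipK \<tau>)"

lemma recipK_variation_nth_0: "\<nu> 0 = 0 \<Longrightarrow> recipK_variation \<tau> \<nu> $ 0 = 0"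
  by (simp add: recipK_variation_def)

lemma has_coeffwise_derivative_recipK_perturbation:
  assumes \<tau>0: "\<tau> 0 = 1" and \<nu>0: "\<nu> 0 = 0"
  shows "has_coeffwise_derivative (\<lambda>\<epsilon>. recipK (\<lambda>k. \<tau> k + of_real \<epsilon> * \<nu> k)) (recipK_variation \<tau> \<nu>) 0"
proof -
  define A where "A = (\<lambda>\<epsilon>::real. cauchy \<tau> + fps_const (of_real \<epsilon>) * cauchy \<nu>)"
  have "cauchy (\<lambda>k. \<tau> k + of_real \<epsilon> * \<nu> k) = A \<epsilon>" for \<epsilon>
    by (rule fps_ext) (simp add: A_def cauchy_def split: nat.split)
  moreover have "has_coeffwise_derivative (\<lambda>\<epsilon>. fps_inv (A \<epsilon>)) (recipK_variation \<tau> \<nu>) 0"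
    using has_coeffwise_derivative_fps_inv[OF
        has_coeffwise_derivative_affine[of "cauchy \<tau>" "cauchy \<nu>" 0]]
    by (simp add: A_def recipK_def recipK_variation_def \<tau>0 \<nu>0)
  ultimately show ?thesis
    by (simp add: recipK_def)
qed

(* K_(mu boxplus tau_eps) - K_(tau_eps) = K_mu - 1/w does not depend on eps, so the reciprocals
   R = 1/K_(mu boxplus tau_eps) and r = 1/K_(tau_eps) vary by dR / R^2 = dr / r^2,
   and R / r = XKtrans tau / XKtrans (mu boxplus tau) at eps = 0. *)
lemma has_coeffwise_derivative_recipK_boxplus:
  assumes \<mu>0: "\<mu> 0 = 1" and \<tau>0: "\<tau> 0 = 1" and \<nu>0: "\<nu> 0 = 0"
  shows "has_coeffwise_derivative (\<lambda>\<epsilon>. recipK (boxplus \<mu> (\<lambda>k. \<tau> k + of_real \<epsilon> * \<nu> k)))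
           (recipK_variation \<tau> \<nu> * (XKtrans \<tau> * inverse (XKtrans (boxplus \<mu> \<tau>))) ^ 2) 0"
proof -
  let ?\<tau>\<epsilon> = "\<lambda>\<epsilon>::real. \<lambda>k. \<tau> k + of_real \<epsilon> * \<nu> k"
  let ?\<delta>r = "recipK_variation \<tau> \<nu>"
  have "has_coeffwise_derivative (\<lambda>\<epsilon>. inverse (fps_shift 1 (recipK (?\<tau>\<epsilon> \<epsilon>))))
      (- (fps_shift 1 ?\<delta>r * inverse (fps_shift 1 (recipK (?\<tau>\<epsilon> 0))) ^ 2)) 0"
    using \<tau>0 \<nu>0
    by (intro has_coeffwise_derivative_inverse has_coeffwise_derivative_shift
        has_coeffwise_derivative_recipK_perturbation)
      (simp_all add: recipK_nth_1[unfolded One_nat_def])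
  then have XKtrans_derivative: "has_coeffwise_derivative (\<lambda>\<epsilon>. XKtrans (?\<tau>\<epsilon> \<epsilon>))
      (- (fps_shift 1 ?\<delta>r * XKtrans \<tau> ^ 2)) 0"
    by (simp add: XKtrans_def)
  have "recipK (boxplus \<mu> (?\<tau>\<epsilon> \<epsilon>)) = fps_X * inverse (XKtrans \<mu> + XKtrans (?\<tau>\<epsilon> \<epsilon>) - 1)" for \<epsilon>
    using \<mu>0 \<tau>0 \<nu>0
    by (simp add: recipK_eq_X_mult_inverse_XKtrans boxplus_nth_0 XKtrans_boxplus)
  moreover have "has_coeffwise_derivative (\<lambda>\<epsilon>. fps_X * inverse (XKtrans \<mu> + XKtrans (?\<tau>\<epsilon> \<epsilon>) - 1))
      (fps_X * (fps_shift 1 ?\<delta>r * XKtrans \<tau> ^ 2 * inverse (XKtrans (boxplus \<mu> \<tau>)) ^ 2)) 0"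
    using has_coeffwise_derivative_mult[OF has_coeffwise_derivative_const
        has_coeffwise_derivative_inverse[OF has_coeffwise_derivative_diff[OF
          has_coeffwise_derivative_add[OF has_coeffwise_derivative_const XKtrans_derivative]
          has_coeffwise_derivative_const]]]
    using \<mu>0 \<tau>0 \<nu>0 by (simp add: XKtrans_nth_0 XKtrans_boxplus)
  moreover have "fps_X * fps_shift 1 ?\<delta>r = ?\<delta>r"
    using \<nu>0 by (intro fps_ext) (simp add: recipK_variation_nth_0)
  then have "fps_X * (fps_shift 1 ?\<delta>r * XKtrans \<tau> ^ 2 * inverse (XKtrans (boxplus \<mu> \<tau>)) ^ 2)
      = ?\<delta>r * (XKtrans \<tau> * inverse (XKtrans (boxplus \<mu> \<tau>))) ^ 2"
    by (metis mult.assoc power_mult_distrib)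
  ultimately show ?thesis
    by simp
qed

lemma has_coeffwise_derivative_cauchy_of_recipK:
  assumes "has_coeffwise_derivative (\<lambda>\<epsilon>. recipK (\<rho> \<epsilon>)) \<delta>R x" and "\<And>\<epsilon>. \<rho> \<epsilon> 0 = 1"
  shows "has_coeffwise_derivative (\<lambda>\<epsilon>. cauchy (\<rho> \<epsilon>))
           (- (\<delta>R oo cauchy (\<rho> x)) * fps_deriv (cauchy (\<rho> x))) x"
  using has_coeffwise_derivative_fps_inv[OF assms(1)] assms(2)
  by (simp add: cauchy_eq_fps_inv_recipK recipK_nth_1[unfolded One_nat_def])

lemma Finv_nth_0 [simp]: "Finv \<tau> \<rho> $ 0 = 0"
  by (simp add: Finv_def)

lemma Finv_nth_1: "\<tau> 0 = 1 \<Longrightarrow> \<rho> 0 = 1 \<Longrightarrow> Finv \<tau> \<rho> $ 1 = 1"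
  by (simp add: Finv_def fps_compose_nth recipK_nth_1[unfolded One_nat_def])

lemma GF_eqI:
  assumes "Finv \<tau> \<rho> $ 1 \<noteq> 0"
    and "d * Finv \<tau> \<rho> ^ 2 = (cauchy \<nu> oo Finv \<tau> \<rho>) * fps_deriv (Finv \<tau> \<rho>) * fps_X ^ 2"
  shows "GF \<nu> \<tau> \<rho> = fps_to_fls d"
proof -
  let ?F = "fps_to_fls (Finv \<tau> \<rho>)"
  have "?F \<noteq> 0"
    using assms(1) by auto
  have "GF \<nu> \<tau> \<rho> = fps_to_fls (cauchy \<nu> oo Finv \<tau> \<rho>)
      * (fls_X ^ 2 * fps_to_fls (fps_deriv (Finv \<tau> \<rho>)) / ?F ^ 2)"
    unfolding GF_def zderiv_def Ftrans_def fls_inverse_deriv' fls_deriv_fps_to_fls by simp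
  also have "\<dots> = fps_to_fls d"
    using arg_cong[OF assms(2), of fps_to_fls] \<open>?F \<noteq> 0\<close>
    by (simp add: fls_times_fps_to_fls fps_to_fls_power field_simps)
  finally show ?thesis .
qed

(* With r = X / k and R = X / K this says: if dR / R^2 = dr / r^2 and R o g = X,
   then (dR o g) (r o g)^2 = (dr o g) X^2. *)
lemma fps_compose_relative_variation:
  fixes g k K \<delta>r :: "'a::field fps"
  assumes g0: "g $ 0 = 0" and k0: "k $ 0 \<noteq> 0" and R: "fps_X * inverse K oo g = fps_X"
  shows "(\<delta>r * (k * inverse K) ^ 2 oo g) * (fps_X * inverse k oo g) ^ 2 = (\<delta>r oo g) * fps_X ^ 2"
proof -
  have k_cancel: "(k oo g) * (inverse k oo g) = 1"
    using g0 k0 by (simp add: inverse_mult_eq_1' fps_compose_mult_distrib[symmetric])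
  have X_eq: "g * (inverse K oo g) = fps_X"
    using R g0 by (simp add: fps_compose_mult_distrib)
  have "(\<delta>r * (k * inverse K) ^ 2 oo g) * (fps_X * inverse k oo g) ^ 2
      = (\<delta>r oo g) * ((k oo g) * (inverse k oo g)) ^ 2 * (g * (inverse K oo g)) ^ 2"
    using g0
    by (simp add: fps_compose_mult_distrib fps_compose_power[symmetric] power_mult_distrib mult_ac)
  then show ?thesis
    by (simp add: k_cancel X_eq)
qed

lemma GF_boxplus_variation:
  assumes \<mu>0: "\<mu> 0 = 1" and \<tau>0: "\<tau> 0 = 1"
  defines "g \<equiv> cauchy (boxplus \<mu> \<tau>)"
  shows "GF \<nu> \<tau> (boxplus \<mu> \<tau>) = fps_to_fls
           (- (recipK_variation \<tau> \<nu> * (XKtrans \<tau> * inverse (XKtrans (boxplus \<mu> \<tau>))) ^ 2 oo g)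
            * fps_deriv g)"
proof (rule GF_eqI)
  let ?\<rho> = "boxplus \<mu> \<tau>"
  let ?f = "Finv \<tau> ?\<rho>"
  let ?r = "recipK \<tau>"
  have \<rho>0: "?\<rho> 0 = 1"
    using \<mu>0 \<tau>0 by (rule boxplus_nth_0)
  then show "?f $ 1 \<noteq> 0"
    using \<tau>0 by (simp add: Finv_nth_1[unfolded One_nat_def])
  have g0: "g $ 0 = 0"
    by (simp add: g_def)
  have "recipK ?\<rho> oo g = fps_X"
    unfolding g_def cauchy_eq_fps_inv_recipK[of ?\<rho>, OF \<rho>0]
    using \<rho>0 by (intro fps_inv_right) (simp_all add: recipK_nth_1[unfolded One_nat_def])
  then have "fps_X * inverse (XKtrans ?\<rho>) oo g = fps_X"
    using \<rho>0 by (simp add: recipK_eq_X_mult_inverse_XKtrans)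
  then have "(recipK_variation \<tau> \<nu> * (XKtrans \<tau> * inverse (XKtrans ?\<rho>)) ^ 2 oo g) * ?f ^ 2
      = (recipK_variation \<tau> \<nu> oo g) * fps_X ^ 2"
    unfolding Finv_def g_def[symmetric] recipK_eq_X_mult_inverse_XKtrans[of \<tau>, OF \<tau>0]
    using g0 \<tau>0 by (intro fps_compose_relative_variation) (simp_all add: XKtrans_nth_0)
  moreover have "recipK_variation \<tau> \<nu> oo g = - (cauchy \<nu> oo ?f) * (fps_deriv ?r oo g)"
    using g0 by (simp add: recipK_variation_def Finv_def g_def fps_compose_mult_distrib
        fps_compose_uminus fps_compose_assoc)
  moreover have "fps_deriv ?f = (fps_deriv ?r oo g) * fps_deriv g"
    using g0 by (simp add: Finv_def g_def fps_compose_deriv)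
  ultimately show "- (recipK_variation \<tau> \<nu> * (XKtrans \<tau> * inverse (XKtrans ?\<rho>)) ^ 2 oo g)
      * fps_deriv g * ?f ^ 2 = (cauchy \<nu> oo ?f) * fps_deriv ?f * fps_X ^ 2"
    by (simp add: algebra_simps)
qed

lemma has_coeffwise_derivative_cauchy_boxplus:
  assumes \<mu>0: "\<mu> 0 = 1" and \<tau>0: "\<tau> 0 = 1" and \<nu>0: "\<nu> 0 = 0"
  shows "\<exists>d. has_coeffwise_derivative (\<lambda>\<epsilon>. cauchy (boxplus \<mu> (\<lambda>k. \<tau> k + of_real \<epsilon> * \<nu> k))) d 0
           \<and> GF \<nu> \<tau> (boxplus \<mu> \<tau>) = fps_to_fls d"
  using has_coeffwise_derivative_cauchy_of_recipK[OF
      has_coeffwise_derivative_recipK_boxplus[of \<mu> \<tau> \<nu>, OF \<mu>0 \<tau>0 \<nu>0]]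
    GF_boxplus_variation[of \<mu> \<tau> \<nu>, OF \<mu>0 \<tau>0] \<mu>0 \<tau>0 \<nu>0
  by (auto simp: boxplus_nth_0)

lemma boxplus_Gateaux_derivative:
  assumes \<mu>0: "\<mu> 0 = 1" and \<tau>0: "\<tau> 0 = 1" and \<nu>0: "\<nu> 0 = 0"
  shows "\<exists>D. D 0 = 0 \<and>
           (\<forall>n. ((\<lambda>\<epsilon>::real. (boxplus \<mu> (\<lambda>k. \<tau> k + complex_of_real \<epsilon> * \<nu> k) n
                               - boxplus \<mu> \<tau> n) / complex_of_real \<epsilon>) \<longlongrightarrow> D n) (at 0)) \<and>
           fps_to_fls (cauchy D) = GF \<nu> \<tau> (boxplus \<mu> \<tau>)"
proof -
  let ?\<rho>\<epsilon> = "\<lambda>\<epsilon>::real. boxplus \<mu> (\<lambda>k. \<tau> k + of_real \<epsilon> * \<nu> k)"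
  obtain d where d: "has_coeffwise_derivative (\<lambda>\<epsilon>. cauchy (?\<rho>\<epsilon> \<epsilon>)) d 0"
    and GF: "GF \<nu> \<tau> (boxplus \<mu> \<tau>) = fps_to_fls d"
    using has_coeffwise_derivative_cauchy_boxplus[of \<mu> \<tau> \<nu>, OF \<mu>0 \<tau>0 \<nu>0] by blast
  have "d $ 0 = 0"
    by (rule has_coeffwise_derivative_nth_eq_0[OF d]) simp
  then have cauchy_D: "cauchy (\<lambda>n. d $ Suc n) = d"
    by (rule cauchy_coeffs)
  have "d $ 1 = 0"
    using \<mu>0 \<tau>0 \<nu>0
    by (intro has_coeffwise_derivative_nth_eq_0[OF d]) (simp add: boxplus_nth_0)
  moreover have "((\<lambda>\<epsilon>::real. (?\<rho>\<epsilon> \<epsilon> n - boxplus \<mu> \<tau> n) / of_real \<epsilon>) \<longlongrightarrow> d $ Suc n) (at 0)" for n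
    using has_vector_derivative_imp_difference_quotient[OF d[unfolded has_coeffwise_derivative_def,
        rule_format, of "Suc n"]] by simp
  ultimately show ?thesis
    using GF cauchy_D by (intro exI[of _ "\<lambda>n. d $ Suc n"]) simp
qed

lemma is_moment_seq_nth_0: "is_moment_seq m \<Longrightarrow> m 0 = 1"
  by (auto simp: is_moment_seq_def prob_space.prob_space)

lemma free_semigroup_nth_0: "free_semigroup mu \<Longrightarrow> 0 \<le> t \<Longrightarrow> mu t 0 = 1"
  unfolding free_semigroup_def using is_moment_seq_nth_0 by blast

lemma boxplus_free_semigroup:
  assumes fs: "free_semigroup mu" and "0 \<le> s" "0 \<le> t"
  shows "boxplus (mu t) (mu s) = mu (s + t)"
proof (rule boxplus_eqI)
  show "mu (s + t) 0 = 1"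
    using assms by (simp add: free_semigroup_nth_0)
  have R: "Rtrans (mu x) = fls_const (of_real x) * Rtrans (mu 1)" if "0 \<le> x" for x
    using fs that unfolding free_semigroup_def by blast
  have "Rtrans (mu t) + Rtrans (mu s)
      = (fls_const (of_real t) + fls_const (of_real s)) * Rtrans (mu 1)"
    using assms R[of t] R[of s] by (simp add: distrib_right)
  also have "\<dots> = Rtrans (mu (s + t))"
    using assms R[of "s + t"] by (simp add: fls_plus_const add.commute)
  finally show "Rtrans (mu (s + t)) = Rtrans (mu t) + Rtrans (mu s)" ..
qed

lemma free_semigroup_perturbation:
  assumes fs: "free_semigroup mu" and s0: "0 \<le> s" and t0: "0 \<le> t" and \<nu>0: "\<nu> 0 = 0"
  shows "((\<lambda>\<epsilon>::real.
             (fls_nth (fps_to_fls (cauchy (boxplus (mu t) (\<lambda>j. mu s j + of_real \<epsilon> * \<nu> j)))) k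
              - fls_nth (fps_to_fls (cauchy (mu (s + t)))) k
              - of_real \<epsilon> * fls_nth (GF \<nu> (mu s) (mu (s + t))) k) / of_real \<epsilon>)
           \<longlongrightarrow> 0) (at 0)"
proof -
  let ?\<rho>\<epsilon> = "\<lambda>\<epsilon>::real. boxplus (mu t) (\<lambda>j. mu s j + of_real \<epsilon> * \<nu> j)"
  have semigroup: "boxplus (mu t) (mu s) = mu (s + t)"
    using fs s0 t0 by (rule boxplus_free_semigroup)
  obtain d where d: "has_coeffwise_derivative (\<lambda>\<epsilon>. cauchy (?\<rho>\<epsilon> \<epsilon>)) d 0"
    and GF: "GF \<nu> (mu s) (mu (s + t)) = fps_to_fls d"
    using has_coeffwise_derivative_cauchy_boxplus[of "mu t" "mu s" \<nu>] fs s0 t0 \<nu>0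
    by (auto simp: free_semigroup_nth_0 semigroup)
  show ?thesis
  proof (cases "k < 0")
    case False
    have "((\<lambda>\<epsilon>. (cauchy (?\<rho>\<epsilon> \<epsilon>) $ nat k - cauchy (?\<rho>\<epsilon> 0) $ nat k - of_real (\<epsilon> - 0) * d $ nat k)
        / of_real (\<epsilon> - 0)) \<longlongrightarrow> 0) (at 0)"
      using d by (intro has_vector_derivative_imp_remainder_quotient)
        (simp add: has_coeffwise_derivative_def)
    then show ?thesis
      using False by (simp add: GF semigroup)
  qed (simp add: GF)
qed

section \<open>Pairings and fluctuation polynomials\<close>

lemma pairing_le:
  assumes "degree p \<le> N"
  shows "pairing \<phi> p = (\<Sum>i\<le>N. coeff p i * \<phi> i)"
  unfolding pairing_def
  by (rule sum.mono_neutral_left) (use assms in \<open>auto simp: coeff_eq_0\<close>)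

lemma pairing_add: "pairing \<phi> (p + q) = pairing \<phi> p + pairing \<phi> q"
proof -
  let ?N = "max (degree p) (degree q)"
  have "degree (p + q) \<le> ?N"
    by (rule degree_add_le) auto
  then show ?thesis
    by (simp add: pairing_le[of _ ?N] sum.distrib distrib_right)
qed

lemma pairing_smult: "pairing \<phi> (smult c p) = c * pairing \<phi> p"
  using degree_smult_le[of c p]
  by (simp add: pairing_le[of _ "degree p"] sum_distrib_left mult.assoc)

lemma pairing_sum: "pairing \<phi> (\<Sum>i\<in>S. p i) = (\<Sum>i\<in>S. pairing \<phi> (p i))"
  by (induction S rule: infinite_finite_induct) (simp_all add: pairing_add pairing_le[of _ 0])

lemma pairing_monom: "pairing \<phi> (monom c n) = c * \<phi> n"
  using degree_monom_le[of c n]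
  by (simp add: pairing_le[of _ n] mult_delta_left)

lemma pairing_pderiv:
  assumes "\<psi> 0 = 0" "\<And>j. \<psi> (Suc j) = of_nat (Suc j) * \<eta> j"
  shows "pairing \<psi> p = pairing \<eta> (pderiv p)"
proof -
  have "pairing \<psi> p = (\<Sum>i\<le>Suc (degree p). coeff p i * \<psi> i)"
    by (rule pairing_le) simp
  also have "\<dots> = (\<Sum>i\<le>degree p. coeff (pderiv p) i * \<eta> i)"
    by (simp add: sum.atMost_Suc_shift assms coeff_pderiv mult_ac del: sum.atMost_Suc)
  also have "\<dots> = pairing \<eta> (pderiv p)"
    by (rule pairing_le[symmetric]) (simp add: degree_pderiv)
  finally show ?thesis .
qed

lemma pairing_Kop:
  assumes "f $ 0 = 0"
  shows "pairing \<eta> (Kop f q) = pairing (\<lambda>j. (cauchy \<eta> oo f) $ Suc j) q"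
proof -
  have "(cauchy \<eta> oo f) $ Suc j = (\<Sum>n\<le>j. \<eta> n * (f ^ (n + 1)) $ Suc j)" for j
    unfolding fps_compose_nth sum.atLeast0_atMost_Suc_shift by (simp add: atLeast0AtMost)
  then show ?thesis
    unfolding Kop_def pairing_sum pairing_smult pairing_monom
    by (simp add: pairing_def mult_ac)
qed

lemma pairing_diff: "pairing (\<lambda>i. a i - b i) p = pairing a p - pairing b p"
  by (simp add: pairing_def sum_subtractf right_diff_distrib)

lemma moments_eqI_pairing:
  fixes a b :: moments
  assumes degree: "\<And>k. k \<ge> 1 \<Longrightarrow> degree (P k) = k"
    and "a 0 = 0" "b 0 = 0"
    and pairing_eq: "\<And>k. k \<ge> 1 \<Longrightarrow> pairing a (P k) = pairing b (P k)"
  shows "a = b"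
proof
  define \<delta> where "\<delta> = (\<lambda>i. a i - b i)"
  have "\<delta> m = 0" for m
  proof (induction m rule: less_induct)
    case (less m)
    show ?case
    proof (cases m)
      case 0
      then show ?thesis by (simp add: \<delta>_def assms)
    next
      case (Suc j)
      have degree_m: "degree (P m) = m"
        using degree Suc by simp
      then have "coeff (P m) m \<noteq> 0"
        using Suc by (metis leading_coeff_0_iff degree_0 nat.distinct(1))
      have "0 = pairing \<delta> (P m)"
        using pairing_eq[of m] Suc by (simp add: \<delta>_def pairing_diff)
      also have "\<dots> = (\<Sum>i\<le>j. coeff (P m) i * \<delta> i) + coeff (P m) m * \<delta> m"
        using degree_m Suc by (simp add: pairing_def)
      also have "(\<Sum>i\<le>j. coeff (P m) i * \<delta> i) = 0"
        using less Suc by (intro sum.neutral) auto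
      finally show ?thesis
        using \<open>coeff (P m) m \<noteq> 0\<close> by simp
    qed
  qed
  then show "a m = b m" for m
    by (simp add: \<delta>_def)
qed

lemma GF_antiderivative:
  assumes \<phi>0: "\<phi> 0 = 0" and \<tau>0: "\<tau> 0 = 1" and \<rho>0: "\<rho> 0 = 1"
  shows "GF \<phi> \<tau> \<rho> = fps_to_fls (fps_X ^ 2 *
           fps_deriv (cauchy (\<lambda>j. \<phi> (Suc j) / of_nat (Suc j)) oo Finv \<tau> \<rho>))"
proof (rule GF_eqI)
  let ?E = "cauchy (\<lambda>j. \<phi> (Suc j) / of_nat (Suc j))"
  let ?f = "Finv \<tau> \<rho>"
  show "?f $ 1 \<noteq> 0"
    using \<tau>0 \<rho>0 by (simp add: Finv_nth_1[unfolded One_nat_def])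
  have "cauchy \<phi> = fps_X ^ 2 * fps_deriv ?E"
  proof (rule fps_ext)
    fix m
    show "cauchy \<phi> $ m = (fps_X ^ 2 * fps_deriv ?E) $ m"
      by (cases m; cases "m - 1") (simp_all add: fps_X_power_mult_nth \<phi>0 del: of_nat_Suc)
  qed
  then have "cauchy \<phi> oo ?f = ?f ^ 2 * (fps_deriv ?E oo ?f)"
    by (simp add: fps_compose_mult_distrib fps_compose_power[symmetric])
  then show "fps_X ^ 2 * fps_deriv (?E oo ?f) * ?f ^ 2
      = (cauchy \<phi> oo ?f) * fps_deriv ?f * fps_X ^ 2"
    by (simp add: fps_compose_deriv mult_ac)
qed

lemma GF_pairing_transport:
  assumes "\<phi> 0 = 0" and "\<tau> 0 = 1" and "\<rho> 0 = 1"
  obtains \<psi> where "GF \<phi> \<tau> \<rho> = fps_to_fls (cauchy \<psi>)" and "\<psi> 0 = 0"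
    and "\<And>p q. Kop (Finv \<tau> \<rho>) (pderiv p) = pderiv q \<Longrightarrow> pairing \<psi> p = pairing \<phi> q"
proof
  define \<eta> where "\<eta> = (\<lambda>j. \<phi> (Suc j) / of_nat (Suc j))"
  define G where "G = cauchy \<eta> oo Finv \<tau> \<rho>"
  define \<psi> where "\<psi> = (\<lambda>j. (fps_X ^ 2 * fps_deriv G) $ Suc j)"
  have "cauchy \<psi> = fps_X ^ 2 * fps_deriv G"
    unfolding \<psi>_def by (rule cauchy_coeffs) (simp add: fps_X_power_mult_nth)
  then show "GF \<phi> \<tau> \<rho> = fps_to_fls (cauchy \<psi>)"
    using GF_antiderivative[of \<phi> \<tau> \<rho>] assms by (simp add: G_def \<eta>_def)
  show \<psi>0: "\<psi> 0 = 0"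
    by (simp add: \<psi>_def fps_X_power_mult_nth)
  fix p q
  assume Kop_pderiv: "Kop (Finv \<tau> \<rho>) (pderiv p) = pderiv q"
  have "pairing \<psi> p = pairing (\<lambda>j. G $ Suc j) (pderiv p)"
    by (rule pairing_pderiv) (simp_all add: \<psi>0 \<psi>_def fps_X_power_mult_nth del: of_nat_Suc)
  also have "\<dots> = pairing \<eta> (pderiv q)"
    unfolding G_def Kop_pderiv[symmetric] by (simp add: pairing_Kop)
  also have "\<dots> = pairing \<phi> q"
    by (rule pairing_pderiv[symmetric]) (simp_all add: assms \<eta>_def del: of_nat_Suc)
  finally show "pairing \<psi> p = pairing \<phi> q" .
qed

lemma fluctuation_polys_degree:
  assumes "fluctuation_polys mu V" "k \<ge> 1" "0 \<le> t"
  shows "degree (V k t) = k"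
proof -
  have "pderiv (V k t) \<noteq> 0" "degree (pderiv (V k t)) = k - 1"
    using assms unfolding fluctuation_polys_def by auto
  then show ?thesis
    using assms(2) by (simp add: degree_pderiv pderiv_eq_0_iff)
qed

lemma GF_dual_family:
  assumes fs: "free_semigroup mu" and fl: "fluctuation_polys mu V" and du: "dual_family V Vs"
    and n: "n \<ge> 1" and s: "0 \<le> s" and st: "s < t"
  shows "GF (Vs n s) (mu s) (mu t) = fps_to_fls (cauchy (Vs n t))"
proof -
  have t: "0 \<le> t"
    using s st by simp
  obtain \<psi> where GF: "GF (Vs n s) (mu s) (mu t) = fps_to_fls (cauchy \<psi>)" and "\<psi> 0 = 0"
    and transport: "\<And>p q. Kop (Finv (mu s) (mu t)) (pderiv p) = pderiv q
                      \<Longrightarrow> pairing \<psi> p = pairing (Vs n s) q"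
    using GF_pairing_transport[of "Vs n s" "mu s" "mu t"] fs du n s t
    by (auto simp: free_semigroup_nth_0 dual_family_def)
  have "\<psi> = Vs n t"
  proof (rule moments_eqI_pairing[where P = "\<lambda>k. V k t"])
    show "degree (V k t) = k" if "k \<ge> 1" for k
      using fl that t by (rule fluctuation_polys_degree)
    show "\<psi> 0 = 0" "Vs n t 0 = 0"
      using \<open>\<psi> 0 = 0\<close> du n t by (auto simp: dual_family_def)
    fix k :: nat
    assume k: "k \<ge> 1"
    have "Kop (Finv (mu s) (mu t)) (pderiv (V k t)) = pderiv (V k s)"
      using fl k s st unfolding fluctuation_polys_def martingale_poly_def Kst_def by blast
    then have "pairing \<psi> (V k t) = pairing (Vs n s) (V k s)"
      by (rule transport)
    also have "\<dots> = pairing (Vs n t) (V k t)"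
      using du n k s t by (simp add: dual_family_def)
    finally show "pairing \<psi> (V k t) = pairing (Vs n t) (V k t)" .
  qed
  then show ?thesis
    using GF by simp
qed

theorem lemma4p12:
  shows
  "(\<forall>\<mu> \<tau> \<nu>. \<mu> 0 = 1 \<and> \<tau> 0 = 1 \<and> \<nu> 0 = 0 \<longrightarrow>
      (\<exists>D. D 0 = 0 \<and>
         (\<forall>n. ((\<lambda>\<epsilon>::real. (boxplus \<mu> (\<lambda>k. \<tau> k + complex_of_real \<epsilon> * \<nu> k) n
                               - boxplus \<mu> \<tau> n) / complex_of_real \<epsilon>) \<longlongrightarrow> D n) (at 0)) \<and>
         fps_to_fls (cauchy D) = GF \<nu> \<tau> (boxplus \<mu> \<tau>)))
   \<and>
   (\<forall>mu. free_semigroup mu \<longrightarrow>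
      (\<forall>s t \<nu>. 0 \<le> s \<and> 0 \<le> t \<and> \<nu> 0 = 0 \<longrightarrow>
         boxplus (mu t) (mu s) = mu (s + t) \<and>
         (\<forall>k::int. ((\<lambda>\<epsilon>::real.
             (fls_nth (fps_to_fls (cauchy (boxplus (mu t) (\<lambda>j. mu s j + complex_of_real \<epsilon> * \<nu> j)))) k
              - fls_nth (fps_to_fls (cauchy (mu (s + t)))) k
              - complex_of_real \<epsilon> * fls_nth (GF \<nu> (mu s) (mu (s + t))) k) / complex_of_real \<epsilon>)
             \<longlongrightarrow> 0) (at 0)))
      \<and>
      (\<forall>V Vs. fluctuation_polys mu V \<and> dual_family V Vs \<longrightarrow>
         (\<forall>n\<ge>1. \<forall>s t. 0 \<le> s \<and> s < t \<longrightarrow>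
            GF (Vs n s) (mu s) (mu t) = fps_to_fls (cauchy (Vs n t)))))"
  by (intro conjI allI impI)
    (blast intro: boxplus_Gateaux_derivative boxplus_free_semigroup free_semigroup_perturbation
      GF_dual_family)+

end
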